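(* Let $D$ be an integral domain such that $D_M$ is a GCD domain for every maximal ideal $M$ of $D$, and suppose there is a family $\mathcal{F}$ of nonzero prime ideals of $D$ such that $D=\bigcap_{P\in\mathcal{F}}D_P$ with the intersection locally finite (every nonzero element of $D$ lies in only finitely many members of $\mathcal{F}$). If the ideal class group $Cl_d(D)$ (invertible fractional ideals modulo principal fractional ideals) is trivial, then $D$ is a GCD domain.
   Context: A GCD domain is an integral domain in which every pair of nonzero elements has a greatest common divisor, equivalently $aD\cap bD$ is principal for all nonzero $a,b$. *)

theory Defs
  imports Main
begin

text \<open>An integral domain D is represented as a subring of a field 'a
(every integral domain embeds into its field of fractions).  All ring-theoretic
notions below are relative to the subring D.\<close>

definition subring :: "'a::field set \<Rightarrow> bool" where
  "subring D \<longleftrightarrow> 0 \<in> D \<and> 1 \<in> D \<and>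
     (\<forall>x\<in>D. \<forall>y\<in>D. x + y \<in> D \<and> x - y \<in> D \<and> x * y \<in> D)"

definition frac_field :: "'a::field set \<Rightarrow> 'a set" where
  "frac_field D = {a / b | a b. a \<in> D \<and> b \<in> D \<and> b \<noteq> 0}"

definition ring_ideal :: "'a::field set \<Rightarrow> 'a set \<Rightarrow> bool" where
  "ring_ideal D I \<longleftrightarrow> I \<subseteq> D \<and> 0 \<in> I \<and>
     (\<forall>x\<in>I. \<forall>y\<in>I. x + y \<in> I) \<and> (\<forall>r\<in>D. \<forall>x\<in>I. r * x \<in> I)"

definition prime_ideal_in :: "'a::field set \<Rightarrow> 'a set \<Rightarrow> bool" where
  "prime_ideal_in D P \<longleftrightarrow> ring_ideal D P \<and> P \<noteq> D \<and>
     (\<forall>a\<in>D. \<forall>b\<in>D. a * b \<in> P \<longrightarrow> a \<in> P \<or> b \<in> P)"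

definition maximal_ideal_in :: "'a::field set \<Rightarrow> 'a set \<Rightarrow> bool" where
  "maximal_ideal_in D M \<longleftrightarrow> ring_ideal D M \<and> M \<noteq> D \<and>
     (\<forall>J. ring_ideal D J \<and> M \<subseteq> J \<longrightarrow> J = M \<or> J = D)"

definition localization :: "'a::field set \<Rightarrow> 'a set \<Rightarrow> 'a set" where
  "localization D P = {a / s | a s. a \<in> D \<and> s \<in> D \<and> s \<notin> P}"

definition rdvd :: "'a::field set \<Rightarrow> 'a \<Rightarrow> 'a \<Rightarrow> bool" where
  "rdvd R a b \<longleftrightarrow> (\<exists>c\<in>R. b = a * c)"

definition is_gcd_domain :: "'a::field set \<Rightarrow> bool" where
  "is_gcd_domain R \<longleftrightarrow>
     (\<forall>a\<in>R. \<forall>b\<in>R. a \<noteq> 0 \<longrightarrow> b \<noteq> 0 \<longrightarrow>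
        (\<exists>d\<in>R. rdvd R d a \<and> rdvd R d b \<and>
           (\<forall>e\<in>R. rdvd R e a \<and> rdvd R e b \<longrightarrow> rdvd R e d)))"

definition fractional_ideal :: "'a::field set \<Rightarrow> 'a set \<Rightarrow> bool" where
  "fractional_ideal D I \<longleftrightarrow> 0 \<in> I \<and> I \<noteq> {0} \<and>
     (\<forall>x\<in>I. \<forall>y\<in>I. x + y \<in> I) \<and> (\<forall>r\<in>D. \<forall>x\<in>I. r * x \<in> I) \<and>
     (\<exists>d\<in>D. d \<noteq> 0 \<and> (\<forall>x\<in>I. d * x \<in> D))"

definition frac_ideal_prod :: "'a::field set \<Rightarrow> 'a set \<Rightarrow> 'a set" where
  "frac_ideal_prod I J = {(\<Sum>i<n. f i * g i) | (n::nat) f g. (\<forall>i<n. f i \<in> I \<and> g i \<in> J)}"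

definition invertible_frac_ideal :: "'a::field set \<Rightarrow> 'a set \<Rightarrow> bool" where
  "invertible_frac_ideal D I \<longleftrightarrow> fractional_ideal D I \<and>
     (\<exists>J. fractional_ideal D J \<and> frac_ideal_prod I J = D)"

definition principal_frac_ideal :: "'a::field set \<Rightarrow> 'a set \<Rightarrow> bool" where
  "principal_frac_ideal D I \<longleftrightarrow> (\<exists>x. x \<noteq> 0 \<and> I = {x * r | r. r \<in> D})"

definition trivial_class_group :: "'a::field set \<Rightarrow> bool" where
  "trivial_class_group D \<longleftrightarrow>
     (\<forall>I. invertible_frac_ideal D I \<longrightarrow> principal_frac_ideal D I)"

end

theory Submission
  imports Defs
begin

text \<open>For nonzero \<open>a, b\<close> a gcd exists as soon as the ideal \<open>I = aD \<inter> bD\<close> of common multiples is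
principal, a generator being an lcm.  As Cl(D) is trivial it suffices that \<open>I\<close> is invertible, with
inverse \<open>(D : I)\<close>.  Every \<open>D\<^sub>M\<close> is a GCD domain and so has lcms, hence \<open>I\<close> is locally principal.
If \<open>I (D : I)\<close> lay in a maximal ideal \<open>M\<close>, pick \<open>l \<in> I\<close> generating \<open>I\<close> at \<open>M\<close>.  Only finitely many
\<open>P \<in> \<F>\<close> contain \<open>l\<close>, and at each of them \<open>l\<close> can be corrected by a factor from \<open>D\<close> outside \<open>M\<close>;
the product \<open>s\<close> of these factors satisfies \<open>(s/l) I \<subseteq> \<Inter>\<^sub>P\<^sub>\<in>\<^sub>\<F> D\<^sub>P = D\<close>, so
\<open>s = l \<cdot> s/l \<in> I (D : I) \<subseteq> M\<close>, contradicting \<open>s \<notin> M\<close>.\<close>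

definition common_multiples :: "'a::field set \<Rightarrow> 'a \<Rightarrow> 'a \<Rightarrow> 'a set" where
  "common_multiples D a b = {x \<in> D. rdvd D a x \<and> rdvd D b x}"

definition colon_ideal :: "'a::field set \<Rightarrow> 'a set \<Rightarrow> 'a set" where
  "colon_ideal D I = {y. \<forall>x\<in>I. y * x \<in> D}"

definition locally_principal_at :: "'a::field set \<Rightarrow> 'a set \<Rightarrow> 'a set \<Rightarrow> bool" where
  "locally_principal_at D I M \<longleftrightarrow> (\<exists>l\<in>I. l \<noteq> 0 \<and> (\<forall>x\<in>I. x / l \<in> localization D M))"

lemma localization_antimono: "Q \<subseteq> P \<Longrightarrow> localization D P \<subseteq> localization D Q"
  unfolding localization_def by blast

lemma mem_localizationI: "x \<in> D \<Longrightarrow> s \<in> D \<Longrightarrow> s \<notin> P \<Longrightarrow> x / s \<in> localization D P"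
  unfolding localization_def by blast

lemma mult_mem_frac_ideal_prod: "x \<in> I \<Longrightarrow> y \<in> J \<Longrightarrow> x * y \<in> frac_ideal_prod I J"
  unfolding frac_ideal_prod_def
  by (intro CollectI exI[of _ "1::nat"] exI[of _ "\<lambda>_. x"] exI[of _ "\<lambda>_. y"]) simp

lemma sum_lessThan_add: "(\<Sum>i<(n::nat) + m. h i) = (\<Sum>i<n. h i) + (\<Sum>i<m. h (n + i))"
  by (induct m) (auto simp: add.commute add.left_commute)

subsection \<open>Least common multiples in GCD domains\<close>

lemma gcd_domain_gcd_exists:
  "is_gcd_domain R \<Longrightarrow> a \<in> R \<Longrightarrow> b \<in> R \<Longrightarrow> a \<noteq> 0 \<Longrightarrow> b \<noteq> 0 \<Longrightarrow>
    \<exists>d\<in>R. rdvd R d a \<and> rdvd R d b \<and> (\<forall>e\<in>R. rdvd R e a \<and> rdvd R e b \<longrightarrow> rdvd R e d)"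
  unfolding is_gcd_domain_def by blast

text \<open>The gcd \<open>g\<close> of \<open>xa\<close> and \<open>xb\<close> is divisible by \<open>ab\<close> and is an associate of \<open>xd\<close>.\<close>

lemma gcd_domain_lcm_dvd:
  fixes R :: "'a::field set"
  assumes mult: "\<And>x y. x \<in> R \<Longrightarrow> y \<in> R \<Longrightarrow> x * y \<in> R" and gcd: "is_gcd_domain R"
    and a: "a \<in> R" "a \<noteq> 0" and b: "b \<in> R" "b \<noteq> 0"
    and d: "d \<in> R" and d_gcd: "\<And>e. e \<in> R \<Longrightarrow> rdvd R e a \<Longrightarrow> rdvd R e b \<Longrightarrow> rdvd R e d"
    and a': "a' \<in> R" "a = d * a'" and b': "b' \<in> R" "b = d * b'"
    and x: "x \<in> R" "rdvd R a x" "rdvd R b x"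
  shows "rdvd R (d * a' * b') x"
proof (cases "x = 0")
  case True
  then show ?thesis using x(1) unfolding rdvd_def by (metis mult_zero_right)
next
  case False
  obtain v u where v: "v \<in> R" "x = a * v" and u: "u \<in> R" "x = b * u"
    using x unfolding rdvd_def by blast
  obtain g where g: "g \<in> R" "rdvd R g (x * a)" "rdvd R g (x * b)"
    and g_gcd: "\<And>e. e \<in> R \<Longrightarrow> rdvd R e (x * a) \<Longrightarrow> rdvd R e (x * b) \<Longrightarrow> rdvd R e g"
    using gcd_domain_gcd_exists[OF gcd, of "x * a" "x * b"] mult x(1) a b False by auto
  have "rdvd R (x * d) (x * a)" "rdvd R (x * d) (x * b)"
    using a' b' unfolding rdvd_def by (auto simp: ac_simps)
  then obtain h where h: "h \<in> R" "g = x * d * h" using g_gcd mult x(1) d unfolding rdvd_def by blast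
  obtain k k' where k: "k \<in> R" "x * a = g * k" and k': "k' \<in> R" "x * b = g * k'"
    using g unfolding rdvd_def by blast
  have "a = d * h * k" "b = d * h * k'" using k k' h False by (simp_all add: ac_simps)
  then have "rdvd R (d * h) d" using d_gcd mult d h k k' unfolding rdvd_def by blast
  then obtain m where m: "m \<in> R" "d = d * h * m" unfolding rdvd_def by blast
  have "x * a = a * b * u" "x * b = a * b * v" using u v by (simp_all add: ac_simps)
  then have "rdvd R (a * b) g" using g_gcd mult a b u v unfolding rdvd_def by blast
  then obtain w where w: "w \<in> R" "g = a * b * w" unfolding rdvd_def by blast
  have "x * d = g * m" using m h by (metis mult.assoc)
  then have "d * x = d * (d * a' * b' * (w * m))" using w a' b' by (simp add: ac_simps)
  moreover have "d \<noteq> 0" using a a' by auto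
  ultimately have "x = d * a' * b' * (w * m)" by simp
  then show ?thesis using mult w m unfolding rdvd_def by blast
qed

lemma gcd_domain_lcm_exists:
  fixes R :: "'a::field set"
  assumes mult: "\<And>x y. x \<in> R \<Longrightarrow> y \<in> R \<Longrightarrow> x * y \<in> R" and gcd: "is_gcd_domain R"
    and a: "a \<in> R" "a \<noteq> 0" and b: "b \<in> R" "b \<noteq> 0"
  shows "\<exists>l\<in>R. l \<noteq> 0 \<and> rdvd R a l \<and> rdvd R b l \<and> (\<forall>x\<in>R. rdvd R a x \<and> rdvd R b x \<longrightarrow> rdvd R l x)"
proof -
  obtain d where d: "d \<in> R" and d_gcd: "\<And>e. e \<in> R \<Longrightarrow> rdvd R e a \<Longrightarrow> rdvd R e b \<Longrightarrow> rdvd R e d"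
    and "rdvd R d a" "rdvd R d b"
    using gcd_domain_gcd_exists[OF gcd a(1) b(1) a(2) b(2)] by blast
  then obtain a' b' where a': "a' \<in> R" "a = d * a'" and b': "b' \<in> R" "b = d * b'"
    unfolding rdvd_def by blast
  have "d * a' * b' \<in> R" "d * a' * b' \<noteq> 0" using mult d a' b' a(2) b(2) by auto
  moreover have "rdvd R a (d * a' * b')" "rdvd R b (d * a' * b')"
    using a' b' unfolding rdvd_def by (auto simp: ac_simps)
  ultimately show ?thesis using gcd_domain_lcm_dvd[OF mult gcd a b d d_gcd a' b'] by blast
qed

context
  fixes D :: "'a::field set"
  assumes subring: "subring D"
begin

lemma subring_closed:
  "0 \<in> D" "1 \<in> D"
  "x \<in> D \<Longrightarrow> y \<in> D \<Longrightarrow> x + y \<in> D"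
  "x \<in> D \<Longrightarrow> y \<in> D \<Longrightarrow> x * y \<in> D"
  using subring unfolding subring_def by auto

lemma ring_ideal_eq_if_one_mem: "ring_ideal D I \<Longrightarrow> 1 \<in> I \<Longrightarrow> I = D"
  unfolding ring_ideal_def by (metis mult.right_neutral subsetI subset_antisym)

lemma exists_maximal_ideal_superset:
  assumes A: "ring_ideal D A" and one: "1 \<notin> A"
  shows "\<exists>M. maximal_ideal_in D M \<and> A \<subseteq> M"
proof -
  let ?S = "{K. ring_ideal D K \<and> A \<subseteq> K \<and> 1 \<notin> K}"
  have "\<exists>M\<in>?S. \<forall>X\<in>?S. M \<subseteq> X \<longrightarrow> X = M"
  proof (rule subset_Zorn_nonempty)
    fix C assume "C \<noteq> {}" and "subset.chain ?S C"
    then have CS: "C \<subseteq> ?S" and C: "C \<noteq> {}"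
      and cmp: "\<And>K L. K \<in> C \<Longrightarrow> L \<in> C \<Longrightarrow> K \<subseteq> L \<or> L \<subseteq> K"
      unfolding subset.chain_def by auto
    have "ring_ideal D (\<Union>C)"
      unfolding ring_ideal_def
    proof (intro conjI ballI)
      fix x y assume "x \<in> \<Union>C" "y \<in> \<Union>C"
      then obtain K L where "K \<in> C" "L \<in> C" "x \<in> K" "y \<in> L" by blast
      then show "x + y \<in> \<Union>C" using cmp[of K L] CS unfolding ring_ideal_def by blast
    next
      fix r x assume "r \<in> D" "x \<in> \<Union>C"
      then show "r * x \<in> \<Union>C" using CS unfolding ring_ideal_def by blast
    qed (use CS C in \<open>auto simp: ring_ideal_def\<close>)
    then show "\<Union>C \<in> ?S" using CS C by blast
  qed (use A one in blast)
  then obtain M where M: "M \<in> ?S" and max: "\<forall>X\<in>?S. M \<subseteq> X \<longrightarrow> X = M" by blast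
  have "maximal_ideal_in D M"
    unfolding maximal_ideal_in_def
    using M max ring_ideal_eq_if_one_mem subring_closed(2) by blast
  then show ?thesis using M by blast
qed

lemma ring_ideal_add_principal:
  assumes ideal: "ring_ideal D M" and a: "a \<in> D"
  shows "ring_ideal D {m + a * r | m r. m \<in> M \<and> r \<in> D}" (is "ring_ideal D ?J")
  unfolding ring_ideal_def
proof (intro conjI ballI)
  fix x y assume "x \<in> ?J" "y \<in> ?J"
  then obtain m r m' r' where "x = m + a * r" "y = m' + a * r'" "m \<in> M" "r \<in> D" "m' \<in> M" "r' \<in> D"
    by blast
  moreover have "x + y = (m + m') + a * (r + r')" using calculation by (simp add: algebra_simps)
  ultimately show "x + y \<in> ?J" using ideal subring_closed unfolding ring_ideal_def by blast
next
  fix s x assume "s \<in> D" "x \<in> ?J"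
  then obtain m r where "s \<in> D" "x = m + a * r" "m \<in> M" "r \<in> D" by blast
  moreover have "s * x = s * m + a * (s * r)" using calculation by (simp add: algebra_simps)
  ultimately show "s * x \<in> ?J" using ideal subring_closed unfolding ring_ideal_def by blast
next
  have "0 = 0 + a * 0" by simp
  then show "0 \<in> ?J" using ideal subring_closed(1) unfolding ring_ideal_def by blast
next
  show "?J \<subseteq> D" using ideal a subring_closed(3,4) unfolding ring_ideal_def by blast
qed

lemma maximal_ideal_imp_prime:
  assumes M: "maximal_ideal_in D M"
  shows "prime_ideal_in D M"
  unfolding prime_ideal_in_def
proof (intro conjI ballI impI)
  have ideal: "ring_ideal D M"
    and max: "\<And>J. ring_ideal D J \<Longrightarrow> M \<subseteq> J \<Longrightarrow> J = M \<or> J = D"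
    using M unfolding maximal_ideal_in_def by auto
  show "ring_ideal D M" "M \<noteq> D" using M unfolding maximal_ideal_in_def by blast+
  fix a b assume a: "a \<in> D" and b: "b \<in> D" and ab: "a * b \<in> M"
  show "a \<in> M \<or> b \<in> M"
  proof (rule disjCI)
    assume "b \<notin> M"
    let ?J = "{m + b * r | m r. m \<in> M \<and> r \<in> D}"
    have "M \<subseteq> ?J"
    proof
      fix m assume "m \<in> M"
      moreover have "m = m + b * 0" by simp
      ultimately show "m \<in> ?J" using subring_closed(1) by blast
    qed
    moreover have "b \<in> ?J"
    proof -
      have "b = 0 + b * 1" by simp
      then show ?thesis using ideal subring_closed(2) unfolding ring_ideal_def by blast
    qed
    ultimately have "?J = D" using max[OF ring_ideal_add_principal[OF ideal b]] \<open>b \<notin> M\<close> by blast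
    then have "1 \<in> ?J" using subring_closed(2) by simp
    then obtain m r where mr: "1 = m + b * r" "m \<in> M" "r \<in> D" by blast
    then have "a = a * m + r * (a * b)" by (metis distrib_left mult.commute mult.left_commute mult_1_right)
    moreover have "a * m \<in> M" "r * (a * b) \<in> M"
      using ideal a mr(2,3) ab unfolding ring_ideal_def by (metis mult.commute)+
    ultimately show "a \<in> M" using ideal unfolding ring_ideal_def by metis
  qed
qed

lemma prime_ideal_one_notin: "prime_ideal_in D P \<Longrightarrow> 1 \<notin> P"
  using ring_ideal_eq_if_one_mem unfolding prime_ideal_in_def by blast

lemma prime_ideal_mult_notin:
  "prime_ideal_in D P \<Longrightarrow> s \<in> D \<Longrightarrow> t \<in> D \<Longrightarrow> s \<notin> P \<Longrightarrow> t \<notin> P \<Longrightarrow> s * t \<notin> P"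
  unfolding prime_ideal_in_def by blast

lemma prod_mem_notin_prime:
  assumes P: "prime_ideal_in D P" and "finite A" and "\<And>Q. Q \<in> A \<Longrightarrow> t Q \<in> D \<and> t Q \<notin> P"
  shows "prod t A \<in> D \<and> prod t A \<notin> P"
  using assms(2,3)
  by (induct A rule: finite_induct)
     (auto simp: subring_closed prime_ideal_one_notin[OF P] prime_ideal_mult_notin[OF P])

lemma localization_mult_left: "u \<in> D \<Longrightarrow> y \<in> localization D P \<Longrightarrow> u * y \<in> localization D P"
  unfolding localization_def by (force intro: subring_closed(4))

lemma localization_mult:
  assumes P: "prime_ideal_in D P" and "y \<in> localization D P" "z \<in> localization D P"
  shows "y * z \<in> localization D P"
proof -
  obtain a s b t where "y = a / s" "z = b / t" "a \<in> D" "s \<in> D" "s \<notin> P" "b \<in> D" "t \<in> D" "t \<notin> P"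
    using assms(2,3) unfolding localization_def by blast
  moreover have "y * z = (a * b) / (s * t)" using calculation by simp
  ultimately show ?thesis
    using mem_localizationI prime_ideal_mult_notin[OF P] subring_closed(4) by metis
qed

lemma subset_localization: "prime_ideal_in D P \<Longrightarrow> D \<subseteq> localization D P"
  using mem_localizationI[of _ D 1 P] subring_closed(2) prime_ideal_one_notin by fastforce

lemma ring_ideal_common_multiples: "ring_ideal D (common_multiples D a b)"
  unfolding ring_ideal_def
proof (intro conjI ballI)
  fix x y assume "x \<in> common_multiples D a b" "y \<in> common_multiples D a b"
  then obtain c c' e e' where "x \<in> D" "x = a * c" "x = b * c'" "c \<in> D" "c' \<in> D"
    and "y \<in> D" "y = a * e" "y = b * e'" "e \<in> D" "e' \<in> D"
    unfolding common_multiples_def rdvd_def by blast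
  moreover have "x + y = a * (c + e)" "x + y = b * (c' + e')"
    using calculation by (simp_all add: distrib_left)
  ultimately show "x + y \<in> common_multiples D a b"
    unfolding common_multiples_def rdvd_def using subring_closed(3) by blast
next
  fix r x assume "r \<in> D" "x \<in> common_multiples D a b"
  then obtain c c' where "r \<in> D" "x \<in> D" "x = a * c" "x = b * c'" "c \<in> D" "c' \<in> D"
    unfolding common_multiples_def rdvd_def by blast
  moreover have "r * x = a * (r * c)" "r * x = b * (r * c')"
    using calculation by (simp_all add: mult.left_commute)
  ultimately show "r * x \<in> common_multiples D a b"
    unfolding common_multiples_def rdvd_def using subring_closed(4) by blast
next
  have "0 = a * 0" "0 = b * 0" by simp_all
  then show "0 \<in> common_multiples D a b"
    unfolding common_multiples_def rdvd_def using subring_closed(1) by blast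
qed (auto simp: common_multiples_def)

lemma mult_mem_common_multiples: "a \<in> D \<Longrightarrow> b \<in> D \<Longrightarrow> a * b \<in> common_multiples D a b"
  unfolding common_multiples_def rdvd_def using subring_closed(4) by (auto simp: mult.commute)

lemma common_multiples_locally_principal:
  assumes M: "maximal_ideal_in D M" and gcd: "is_gcd_domain (localization D M)"
    and a: "a \<in> D" "a \<noteq> 0" and b: "b \<in> D" "b \<noteq> 0"
  shows "locally_principal_at D (common_multiples D a b) M"
proof -
  let ?R = "localization D M"
  have P: "prime_ideal_in D M" using maximal_ideal_imp_prime[OF M] .
  have D_sub: "D \<subseteq> ?R" using subset_localization[OF P] .
  have "a \<in> ?R" "b \<in> ?R" using a(1) b(1) D_sub by blast+
  then obtain l where l: "l \<noteq> 0" "rdvd ?R a l" "rdvd ?R b l"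
    and l_dvd: "\<forall>x\<in>?R. rdvd ?R a x \<and> rdvd ?R b x \<longrightarrow> rdvd ?R l x"
    using gcd_domain_lcm_exists[OF localization_mult[OF P] gcd _ a(2) _ b(2)] by blast
  obtain u s u' s' where lu: "l = a * (u / s)" "u \<in> D" "s \<in> D" "s \<notin> M"
    and lu': "l = b * (u' / s')" "u' \<in> D" "s' \<in> D" "s' \<notin> M"
    using l(2,3) unfolding rdvd_def localization_def by blast
  have "0 \<in> M" using P unfolding prime_ideal_in_def ring_ideal_def by blast
  then have "s \<noteq> 0" "s' \<noteq> 0" using lu(4) lu'(4) by auto
  \<comment> \<open>clearing the denominators of \<open>l\<close> gives a generator inside \<open>D\<close>\<close>
  define l' where "l' = l * s * s'"
  have l'_a: "l' = a * (u * s')" using lu(1) \<open>s \<noteq> 0\<close> unfolding l'_def by simp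
  have l'_b: "l' = b * (u' * s)" using lu'(1) \<open>s' \<noteq> 0\<close> unfolding l'_def by simp
  have "u * s' \<in> D" "u' * s \<in> D" using lu lu' subring_closed(4) by blast+
  moreover from this(1) have "l' \<in> D" unfolding l'_a using a(1) subring_closed(4) by blast
  ultimately have l'_mem: "l' \<in> common_multiples D a b"
    unfolding common_multiples_def rdvd_def using l'_a l'_b by blast
  have "x / l' \<in> ?R" if x: "x \<in> common_multiples D a b" for x
  proof -
    have "x \<in> ?R" "rdvd ?R a x" "rdvd ?R b x"
      using x D_sub unfolding common_multiples_def rdvd_def by blast+
    then have "rdvd ?R l x" using l_dvd by blast
    then obtain p q where pq: "x = l * (p / q)" "p \<in> D" "q \<in> D" "q \<notin> M"
      unfolding rdvd_def localization_def by blast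
    have "q * s \<in> D" "q * s \<notin> M"
      using pq lu subring_closed(4) prime_ideal_mult_notin[OF P] by blast+
    then have "q * s * s' \<in> D" "q * s * s' \<notin> M"
      using lu' subring_closed(4) prime_ideal_mult_notin[OF P] by blast+
    moreover have "x / l' = p / (q * s * s')"
      using pq(1) \<open>s \<noteq> 0\<close> \<open>s' \<noteq> 0\<close> l(1) unfolding l'_def by (simp add: field_simps)
    ultimately show ?thesis using mem_localizationI[OF pq(2)] by simp
  qed
  moreover have "l' \<noteq> 0" using l(1) \<open>s \<noteq> 0\<close> \<open>s' \<noteq> 0\<close> unfolding l'_def by simp
  ultimately show ?thesis unfolding locally_principal_at_def using l'_mem by blast
qed

lemma gcd_exists_if_common_multiples_principal:
  assumes a: "a \<in> D" "a \<noteq> 0" and b: "b \<in> D" "b \<noteq> 0"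
    and x: "x \<noteq> 0" and principal: "common_multiples D a b = {x * r | r. r \<in> D}"
  shows "\<exists>d\<in>D. rdvd D d a \<and> rdvd D d b \<and> (\<forall>e\<in>D. rdvd D e a \<and> rdvd D e b \<longrightarrow> rdvd D e d)"
proof -
  have "x = x * 1" by simp
  then have "x \<in> common_multiples D a b" unfolding principal using subring_closed(2) by blast
  then obtain c c' where c: "c \<in> D" "x = a * c" and c': "c' \<in> D" "x = b * c'"
    unfolding common_multiples_def rdvd_def by blast
  obtain d where d: "d \<in> D" "a * b = x * d"
    using mult_mem_common_multiples[OF a(1) b(1)] unfolding principal by blast
  \<comment> \<open>\<open>x\<close> is an lcm of \<open>a\<close> and \<open>b\<close>, so \<open>d = ab/x\<close> is a gcd\<close>
  have "b * a = b * (d * c')" using d(2) c'(2) by (simp add: ac_simps)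
  then have "a = d * c'" using b(2) by simp
  have "a * b = a * (d * c)" using d(2) c(2) by (simp add: ac_simps)
  then have "b = d * c" using a(2) by simp
  with \<open>a = d * c'\<close> have "rdvd D d a" "rdvd D d b" using c c' unfolding rdvd_def by blast+
  moreover have "rdvd D e d" if e: "e \<in> D" "rdvd D e a" "rdvd D e b" for e
  proof -
    obtain a' b' where ab': "a' \<in> D" "a = e * a'" "b' \<in> D" "b = e * b'"
      using e unfolding rdvd_def by blast
    have "e * a' * b' \<in> common_multiples D a b"
      unfolding common_multiples_def rdvd_def using ab' e(1) subring_closed(4) by (auto simp: ac_simps)
    then obtain t where t: "t \<in> D" "e * a' * b' = x * t" unfolding principal by blast
    have "x * d = e * (e * a' * b')" using d(2) ab' by (simp add: ac_simps)
    also have "\<dots> = x * (e * t)" using t by (simp add: ac_simps)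
    finally have "d = e * t" using x by simp
    then show ?thesis using t unfolding rdvd_def by blast
  qed
  ultimately show ?thesis using d(1) by blast
qed

lemma ring_ideal_frac_ideal_prod:
  assumes I_mult: "\<And>r x. r \<in> D \<Longrightarrow> x \<in> I \<Longrightarrow> r * x \<in> I"
    and IJ: "\<And>x y. x \<in> I \<Longrightarrow> y \<in> J \<Longrightarrow> x * y \<in> D"
  shows "ring_ideal D (frac_ideal_prod I J)"
  unfolding ring_ideal_def
proof (intro conjI ballI)
  show "frac_ideal_prod I J \<subseteq> D"
  proof
    fix z assume "z \<in> frac_ideal_prod I J"
    then obtain n f g where "z = (\<Sum>i<(n::nat). f i * g i)" "\<forall>i<n. f i \<in> I \<and> g i \<in> J"
      unfolding frac_ideal_prod_def by blast
    moreover have "\<forall>i<n. f i \<in> I \<and> g i \<in> J \<Longrightarrow> (\<Sum>i<n. f i * g i) \<in> D" for n :: nat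
      by (induct n) (auto simp: subring_closed IJ)
    ultimately show "z \<in> D" by blast
  qed
  show "0 \<in> frac_ideal_prod I J"
    unfolding frac_ideal_prod_def by (rule CollectI, rule exI[of _ "0::nat"]) simp
next
  fix x y assume "x \<in> frac_ideal_prod I J" "y \<in> frac_ideal_prod I J"
  then obtain n f g m f' g' where x: "x = (\<Sum>i<(n::nat). f i * g i)" "\<forall>i<n. f i \<in> I \<and> g i \<in> J"
    and y: "y = (\<Sum>i<(m::nat). f' i * g' i)" "\<forall>i<m. f' i \<in> I \<and> g' i \<in> J"
    unfolding frac_ideal_prod_def by blast
  define F where "F i = (if i < n then f i else f' (i - n))" for i
  define G where "G i = (if i < n then g i else g' (i - n))" for i
  have "x + y = (\<Sum>i<n + m. F i * G i)"
    unfolding sum_lessThan_add x y F_def G_def by simp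
  moreover have "\<forall>i<n + m. F i \<in> I \<and> G i \<in> J" using x y unfolding F_def G_def by auto
  ultimately show "x + y \<in> frac_ideal_prod I J" unfolding frac_ideal_prod_def by blast
next
  fix r x assume r: "r \<in> D" and "x \<in> frac_ideal_prod I J"
  then obtain n f g where x: "x = (\<Sum>i<(n::nat). f i * g i)" "\<forall>i<n. f i \<in> I \<and> g i \<in> J"
    unfolding frac_ideal_prod_def by blast
  have "r * x = (\<Sum>i<n. (r * f i) * g i)" unfolding x by (simp add: sum_distrib_left ac_simps)
  moreover have "\<forall>i<n. r * f i \<in> I \<and> g i \<in> J" using x I_mult r by blast
  ultimately show "r * x \<in> frac_ideal_prod I J" unfolding frac_ideal_prod_def
    by (intro CollectI exI[of _ n] exI[of _ "\<lambda>i. r * f i"] exI[of _ g]) simp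
qed

lemma fractional_ideal_if_ring_ideal: "ring_ideal D I \<Longrightarrow> I \<noteq> {0} \<Longrightarrow> fractional_ideal D I"
  unfolding fractional_ideal_def ring_ideal_def
  using subring_closed(2) by (metis mult_1 one_neq_zero subsetD)

lemma fractional_ideal_colon_ideal:
  assumes I: "ring_ideal D I" and c: "c \<in> I" "c \<noteq> 0"
  shows "fractional_ideal D (colon_ideal D I)"
  unfolding fractional_ideal_def
proof (intro conjI ballI)
  have "I \<subseteq> D" using I unfolding ring_ideal_def by blast
  then have "1 \<in> colon_ideal D I" unfolding colon_ideal_def by auto
  then show "colon_ideal D I \<noteq> {0}" by auto
  show "\<exists>d\<in>D. d \<noteq> 0 \<and> (\<forall>y\<in>colon_ideal D I. d * y \<in> D)"
  proof (intro bexI conjI ballI)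
    fix y assume "y \<in> colon_ideal D I"
    then have "y * c \<in> D" using c(1) unfolding colon_ideal_def by blast
    then show "c * y \<in> D" by (simp add: mult.commute)
  qed (use c \<open>I \<subseteq> D\<close> in auto)
next
  fix x y assume "x \<in> colon_ideal D I" "y \<in> colon_ideal D I"
  then show "x + y \<in> colon_ideal D I"
    unfolding colon_ideal_def using subring_closed(3) by (simp add: distrib_right)
next
  fix r x assume "r \<in> D" "x \<in> colon_ideal D I"
  then show "r * x \<in> colon_ideal D I"
    unfolding colon_ideal_def using subring_closed(4) by (simp add: mult.assoc)
qed (simp add: colon_ideal_def subring_closed(1))

subsection \<open>Invertibility of locally principal ideals\<close>

text \<open>The correction factor \<open>t\<close> is the denominator of \<open>c/l = u/t \<in> D\<^sub>M\<close>, where \<open>c\<close> generates \<open>I\<close> at a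
maximal ideal containing \<open>Q\<close>.\<close>

lemma local_generator_correction:
  assumes loc_princ: "\<And>M'. maximal_ideal_in D M' \<Longrightarrow> locally_principal_at D I M'"
    and M: "prime_ideal_in D M" and Q: "prime_ideal_in D Q"
    and l: "l \<in> I" "l \<noteq> 0" and l_gen: "\<forall>x\<in>I. x / l \<in> localization D M"
  shows "\<exists>t\<in>D. t \<notin> M \<and> (\<forall>x\<in>I. t * x / l \<in> localization D Q)"
proof -
  obtain M' where M': "maximal_ideal_in D M'" and "Q \<subseteq> M'"
    using exists_maximal_ideal_superset Q prime_ideal_one_notin unfolding prime_ideal_in_def by blast
  then have loc_sub: "localization D M' \<subseteq> localization D Q" by (simp add: localization_antimono)
  obtain c where c: "c \<in> I" "c \<noteq> 0" and c_gen: "\<forall>x\<in>I. x / c \<in> localization D M'"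
    using loc_princ[OF M'] unfolding locally_principal_at_def by blast
  obtain u t where ut: "c / l = u / t" "u \<in> D" "t \<in> D" "t \<notin> M"
    using l_gen c(1) unfolding localization_def by blast
  have "t \<noteq> 0" using ut(4) M unfolding prime_ideal_in_def ring_ideal_def by auto
  then have u: "u = t * c / l" using ut(1) l(2) by (simp add: field_simps)
  have "t * x / l \<in> localization D Q" if x: "x \<in> I" for x
  proof -
    have "u * (x / c) \<in> localization D Q"
      using localization_mult_left[OF ut(2)] c_gen x loc_sub by blast
    moreover have "u * (x / c) = t * x / l" using u c(2) by simp
    ultimately show ?thesis by simp
  qed
  then show ?thesis using ut by blast
qed

context
  fixes \<F> :: "'a set set"
  assumes F_prime: "\<And>P. P \<in> \<F> \<Longrightarrow> prime_ideal_in D P"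
    and D_eq: "D = {x \<in> frac_field D. \<forall>P\<in>\<F>. x \<in> localization D P}"
    and F_finite: "\<And>x. x \<in> D \<Longrightarrow> x \<noteq> 0 \<Longrightarrow> finite {P \<in> \<F>. x \<in> P}"
begin

text \<open>Only the finitely many \<open>P \<in> \<F>\<close> containing \<open>l\<close> need a correction factor; at all other
members of \<open>\<F>\<close> the denominator \<open>l\<close> is already a unit.\<close>

lemma colon_ideal_meets_complement:
  assumes I: "I \<subseteq> D"
    and loc_princ: "\<And>M'. maximal_ideal_in D M' \<Longrightarrow> locally_principal_at D I M'"
    and M: "prime_ideal_in D M"
    and l: "l \<in> I" "l \<noteq> 0" and l_gen: "\<forall>x\<in>I. x / l \<in> localization D M"
  shows "\<exists>s\<in>D. s \<notin> M \<and> s / l \<in> colon_ideal D I"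
proof -
  have lD: "l \<in> D" using l I by blast
  define \<Q> where "\<Q> = {P \<in> \<F>. l \<in> P}"
  have fin: "finite \<Q>" unfolding \<Q>_def using F_finite[OF lD l(2)] .
  have "\<forall>Q\<in>\<Q>. \<exists>t. t \<in> D \<and> t \<notin> M \<and> (\<forall>x\<in>I. t * x / l \<in> localization D Q)"
    using local_generator_correction[OF loc_princ M _ l l_gen] F_prime unfolding \<Q>_def by blast
  then obtain t where t: "\<And>Q. Q \<in> \<Q> \<Longrightarrow> t Q \<in> D \<and> t Q \<notin> M \<and> (\<forall>x\<in>I. t Q * x / l \<in> localization D Q)"
    by (metis bchoice)
  define s where "s = prod t \<Q>"
  have s: "s \<in> D" "s \<notin> M" unfolding s_def using prod_mem_notin_prime[OF M fin] t by blast+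
  have "s / l * x \<in> D" if x: "x \<in> I" for x
  proof -
    have sx: "s * x \<in> D" using s x I subring_closed(4) by blast
    have "s / l * x \<in> localization D P" if P: "P \<in> \<F>" for P
    proof (cases "P \<in> \<Q>")
      case True
      have "prod t (\<Q> - {P}) \<in> D"
        using prod_mem_notin_prime[OF M, of "\<Q> - {P}" t] fin t by blast
      then have "prod t (\<Q> - {P}) * (t P * x / l) \<in> localization D P"
        using localization_mult_left t[OF True] x by blast
      moreover have "s / l * x = prod t (\<Q> - {P}) * (t P * x / l)"
        unfolding s_def prod.remove[OF fin True] by (simp add: ac_simps)
      ultimately show ?thesis by (simp only:)
    next
      case False
      then have "l \<notin> P" using P unfolding \<Q>_def by blast
      then show ?thesis using mem_localizationI[OF sx lD] by simp
    qed
    moreover have "s / l * x \<in> frac_field D"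
      unfolding frac_field_def using sx lD l(2) by (intro CollectI exI[of _ "s * x"] exI[of _ l]) simp
    ultimately show ?thesis using D_eq by blast
  qed
  then have "s / l \<in> colon_ideal D I" unfolding colon_ideal_def by blast
  then show ?thesis using s by blast
qed

lemma frac_ideal_prod_colon_ideal:
  assumes I: "ring_ideal D I"
    and loc_princ: "\<And>M. maximal_ideal_in D M \<Longrightarrow> locally_principal_at D I M"
  shows "frac_ideal_prod I (colon_ideal D I) = D"
proof -
  have ideal: "ring_ideal D (frac_ideal_prod I (colon_ideal D I))"
    using I by (intro ring_ideal_frac_ideal_prod) (auto simp: ring_ideal_def colon_ideal_def mult.commute)
  have "1 \<in> frac_ideal_prod I (colon_ideal D I)"
  proof (rule ccontr)
    assume "1 \<notin> frac_ideal_prod I (colon_ideal D I)"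
    then obtain M where M: "maximal_ideal_in D M" and sub: "frac_ideal_prod I (colon_ideal D I) \<subseteq> M"
      using exists_maximal_ideal_superset[OF ideal] by blast
    obtain l where l: "l \<in> I" "l \<noteq> 0" and l_gen: "\<forall>x\<in>I. x / l \<in> localization D M"
      using loc_princ[OF M] unfolding locally_principal_at_def by blast
    obtain s where s: "s \<notin> M" "s / l \<in> colon_ideal D I"
      using colon_ideal_meets_complement[OF _ loc_princ maximal_ideal_imp_prime[OF M] l l_gen] I
      unfolding ring_ideal_def by blast
    have "l * (s / l) \<in> M" using mult_mem_frac_ideal_prod[OF l(1) s(2)] sub by blast
    then show False using s(1) l(2) by simp
  qed
  then show ?thesis using ring_ideal_eq_if_one_mem[OF ideal] by blast
qed

end

end

theorem mainTheorem19:
  fixes D :: "'a::field set" and \<F> :: "'a set set"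
  assumes "subring D"
    and "\<And>M. maximal_ideal_in D M \<Longrightarrow> is_gcd_domain (localization D M)"
    and "\<And>P. P \<in> \<F> \<Longrightarrow> prime_ideal_in D P \<and> P \<noteq> {0}"
    and "D = {x \<in> frac_field D. \<forall>P\<in>\<F>. x \<in> localization D P}"
    and "\<And>x. x \<in> D \<Longrightarrow> x \<noteq> 0 \<Longrightarrow> finite {P \<in> \<F>. x \<in> P}"
    and "trivial_class_group D"
  shows "is_gcd_domain D"
  unfolding is_gcd_domain_def
proof (intro ballI impI)
  fix a b assume a: "a \<in> D" "a \<noteq> 0" and b: "b \<in> D" "b \<noteq> 0"
  let ?I = "common_multiples D a b"
  have ideal: "ring_ideal D ?I" using ring_ideal_common_multiples[OF assms(1)] .
  have ab: "a * b \<in> ?I" "a * b \<noteq> 0" using mult_mem_common_multiples[OF assms(1) a(1) b(1)] a b by auto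
  have "frac_ideal_prod ?I (colon_ideal D ?I) = D"
    using frac_ideal_prod_colon_ideal[OF assms(1) _ assms(4,5) ideal]
      common_multiples_locally_principal[OF assms(1) _ assms(2) a b] assms(3) by blast
  then have "invertible_frac_ideal D ?I"
    unfolding invertible_frac_ideal_def
    using fractional_ideal_if_ring_ideal[OF assms(1) ideal] fractional_ideal_colon_ideal[OF assms(1) ideal ab]
      ab by blast
  then obtain x where "x \<noteq> 0" "?I = {x * r | r. r \<in> D}"
    using assms(6) unfolding trivial_class_group_def principal_frac_ideal_def by blast
  then show "\<exists>d\<in>D. rdvd D d a \<and> rdvd D d b \<and> (\<forall>e\<in>D. rdvd D e a \<and> rdvd D e b \<longrightarrow> rdvd D e d)"
    using gcd_exists_if_common_multiples_principal[OF assms(1) a b] by blast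
qed

end
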